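(* Let $\alpha\in\mathbb{R}\setminus\{0\}$ and $n\in\mathbb{N}$. Let $I_n$ and $f$ be as defined in the context. Then $f$ maps $I_n\setminus\{n\}$ into $(-1,1)\cup\{(-1)^n\}$. Moreover, for $x\in I_n\setminus\{n\}$ we have $f(x)=(-1)^n$ if and only if $$\left|\cos x\pi+\frac{\alpha}{4x}\sin x\pi\right|=1,$$ and $$\lim_{x\in I_n,\;x\to n} f(x)=(-1)^{n+1}.$$
   Context: Put $g(x)=\cos x\pi+\frac{\alpha}{4x}\sin x\pi$ for $x>0$. For $n\in\mathbb{N}$, let $I_n$ be the connected component containing $n$ of the set $\{x>0:\ |g(x)|\ge 1\}$; note that $|g(n)|=1$. For $x\in I_n\setminus\{n\}$ define $$f(x)=-\cos x\pi+\frac{\sin^2 x\pi}{\frac{\alpha}{4x}\sin x\pi\pm\sqrt{g(x)^2-1}} ,$$ where the sign $\pm$ is the sign of $g(x)$. *)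

theory Defs
  imports "HOL-Analysis.Analysis"
begin

definition gfun :: "real \<Rightarrow> real \<Rightarrow> real" where
  "gfun \<alpha> x = cos (x * pi) + \<alpha> / (4 * x) * sin (x * pi)"

definition Icomp :: "real \<Rightarrow> nat \<Rightarrow> real set" where
  "Icomp \<alpha> n = connected_component_set {x. x > 0 \<and> \<bar>gfun \<alpha> x\<bar> \<ge> 1} (real n)"

definition ffun :: "real \<Rightarrow> real \<Rightarrow> real" where
  "ffun \<alpha> x = - cos (x * pi) + (sin (x * pi))^2 /
      (\<alpha> / (4 * x) * sin (x * pi) + sgn (gfun \<alpha> x) * sqrt ((gfun \<alpha> x)^2 - 1))"

end

theory Submission imports Defs begin

text \<open>
  On the connected set \<open>I\<^sub>n\<close> the continuous function \<open>g\<close> satisfies \<open>|g| \<ge> 1\<close>, so it keeps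
  the sign of \<open>g(n) = (-1)\<^sup>n\<close>; since \<open>g(m) = (-1)\<^sup>m\<close> at every integer, \<open>I\<^sub>n\<close> lies strictly
  between \<open>n - 1\<close> and \<open>n + 1\<close>, hence \<open>sin x\<pi> \<noteq> 0\<close> on \<open>I\<^sub>n - {n}\<close>.
  With \<open>c = cos x\<pi>\<close>, \<open>s = sin x\<pi>\<close> and \<open>\<mu> = g + sgn g \<cdot> \<surd>(g\<^sup>2 - 1)\<close> one finds
  \<open>f = (1 - c\<mu>) / (\<mu> - c)\<close>, a M\<ouml>bius map of the unit disc (as \<open>|c| < 1\<close>) fixing \<open>\<plusminus>1\<close>;
  since \<open>|\<mu>| \<ge> 1\<close> with equality iff \<open>|g| = 1\<close>, \<open>f\<close> lies in \<open>(-1,1) \<union> {sgn g}\<close>.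
  At \<open>x = n\<close> the formula for \<open>f\<close> degenerates to \<open>0/0\<close>; multiplying by the conjugate
  square root gives an expression that is continuous at \<open>n\<close> (this uses \<open>\<alpha> \<noteq> 0\<close>)
  with value \<open>-(-1)\<^sup>n\<close>.
\<close>

lemma connected_continuous_nonzero_same_sign:
  fixes f :: "'a::topological_space \<Rightarrow> real"
  assumes "connected S" "continuous_on S f" "\<And>x. x \<in> S \<Longrightarrow> f x \<noteq> 0" "a \<in> S" "b \<in> S"
  shows "0 < f a * f b"
proof (rule ccontr)
  assume "\<not> 0 < f a * f b"
  then have "f a \<le> 0 \<and> 0 \<le> f b \<or> f b \<le> 0 \<and> 0 \<le> f a"
    by (auto simp: zero_less_mult_iff)
  moreover have "connected (f ` S)"
    using assms(2,1) by (rule connected_continuous_image)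
  ultimately have "0 \<in> f ` S"
    using assms(4,5) unfolding connected_iff_interval by blast
  then show False using assms(3) by auto
qed

lemma abs_mobius_less_one:
  fixes c \<mu> :: real
  assumes "c\<^sup>2 < 1" "1 < \<bar>\<mu>\<bar>"
  shows "\<bar>(1 - c * \<mu>) / (\<mu> - c)\<bar> < 1"
proof -
  have "1 < \<mu>\<^sup>2"
    using one_less_power[OF assms(2), of 2] by simp
  have "(1 - c * \<mu>)\<^sup>2 - (\<mu> - c)\<^sup>2 = (1 - c\<^sup>2) * (1 - \<mu>\<^sup>2)"
    by (simp add: power2_eq_square algebra_simps)
  also have "\<dots> < 0"
    using assms(1) \<open>1 < \<mu>\<^sup>2\<close> by (simp add: mult_pos_neg)
  finally have "\<bar>1 - c * \<mu>\<bar>\<^sup>2 < \<bar>\<mu> - c\<bar>\<^sup>2" by simp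
  then have "\<bar>1 - c * \<mu>\<bar> < \<bar>\<mu> - c\<bar>"
    using power2_less_imp_less abs_ge_zero by blast
  then show ?thesis by simp
qed

lemma sgn_branch_quotient:
  fixes c s a :: real
  defines "g \<equiv> c + a * s"
  assumes cs: "c\<^sup>2 + s\<^sup>2 = 1" and "s \<noteq> 0" and g1: "1 \<le> \<bar>g\<bar>"
  shows "a * s + sgn g * sqrt (g\<^sup>2 - 1) \<noteq> 0"
    and "\<bar>g\<bar> = 1 \<Longrightarrow> - c + s\<^sup>2 / (a * s + sgn g * sqrt (g\<^sup>2 - 1)) = sgn g"
    and "1 < \<bar>g\<bar> \<Longrightarrow> \<bar>- c + s\<^sup>2 / (a * s + sgn g * sqrt (g\<^sup>2 - 1))\<bar> < 1"
proof -
  define e R where "e = sgn g" and "R = sqrt (g\<^sup>2 - 1)"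
  define \<mu> where "\<mu> = g + e * R"
  have "1 \<le> g\<^sup>2"
    using one_le_power[OF g1, of 2] by simp
  then have R: "0 \<le> R" "R = 0 \<longleftrightarrow> \<bar>g\<bar> = 1"
    unfolding R_def by (auto simp: power2_eq_1_iff abs_if)
  have e: "e * e = 1" "e * g = \<bar>g\<bar>"
    using g1 unfolding e_def by (auto simp: sgn_if)
  have "e * \<mu> = \<bar>g\<bar> + R"
    unfolding \<mu>_def using e by (simp add: algebra_simps)
  then have "\<mu> = e * (\<bar>g\<bar> + R)"
    using e(1) by (metis mult.assoc mult_1)
  moreover have "\<bar>e\<bar> = 1"
    using g1 unfolding e_def by (auto simp: sgn_if)
  ultimately have abs_\<mu>: "\<bar>\<mu>\<bar> = \<bar>g\<bar> + R"
    using R(1) by (simp add: abs_mult)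
  have "0 < s\<^sup>2" using \<open>s \<noteq> 0\<close> by simp
  then have c2: "c\<^sup>2 < 1" using cs by linarith
  then have "\<bar>c\<bar> < \<bar>\<mu>\<bar>"
    using abs_\<mu> R(1) g1 by (simp add: abs_square_less_1)
  then have den: "a * s + e * R = \<mu> - c" "\<mu> - c \<noteq> 0"
    unfolding \<mu>_def g_def by auto
  then show "a * s + sgn g * sqrt (g\<^sup>2 - 1) \<noteq> 0"
    unfolding e_def R_def by simp
  have "s\<^sup>2 = 1 - c\<^sup>2" using cs by simp
  then have "- c + s\<^sup>2 / (a * s + e * R) = - c + (1 - c\<^sup>2) / (\<mu> - c)"
    using den(1) by simp
  also have "\<dots> = (1 - c * \<mu>) / (\<mu> - c)"
    using den(2) by (simp add: field_simps power2_eq_square)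
  finally have quot: "- c + s\<^sup>2 / (a * s + e * R) = (1 - c * \<mu>) / (\<mu> - c)" .
  show "\<bar>g\<bar> = 1 \<Longrightarrow> - c + s\<^sup>2 / (a * s + sgn g * sqrt (g\<^sup>2 - 1)) = sgn g"
  proof -
    assume "\<bar>g\<bar> = 1"
    then have "\<mu> = e"
      using R(2) unfolding \<mu>_def e_def by (auto simp: sgn_if abs_if split: if_splits)
    then have "(1 - c * \<mu>) / (\<mu> - c) = e"
      using den(2) e(1) by (simp add: field_simps)
    then show ?thesis using quot unfolding e_def R_def by simp
  qed
  show "1 < \<bar>g\<bar> \<Longrightarrow> \<bar>- c + s\<^sup>2 / (a * s + sgn g * sqrt (g\<^sup>2 - 1))\<bar> < 1"
    using quot abs_mobius_less_one[OF c2, of \<mu>] abs_\<mu> R(1)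
    unfolding e_def R_def by simp
qed

text \<open>The product of the denominator with its conjugate \<open>a s - sgn g \<cdot> \<surd>(g\<^sup>2 - 1)\<close> is \<open>s (s - 2 a c)\<close>.\<close>

lemma sgn_branch_quotient_rationalize:
  fixes c s a :: real
  defines "g \<equiv> c + a * s"
  assumes cs: "c\<^sup>2 + s\<^sup>2 = 1" and "s \<noteq> 0" and "1 \<le> \<bar>g\<bar>" and "s - 2 * a * c \<noteq> 0"
  shows "s\<^sup>2 / (a * s + sgn g * sqrt (g\<^sup>2 - 1))
    = s * (a * s - sgn g * sqrt (g\<^sup>2 - 1)) / (s - 2 * a * c)"
proof -
  define e R where "e = sgn g" and "R = sqrt (g\<^sup>2 - 1)"
  have "1 \<le> g\<^sup>2"
    using one_le_power[OF \<open>1 \<le> \<bar>g\<bar>\<close>, of 2] by simp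
  then have "R\<^sup>2 = g\<^sup>2 - 1" unfolding R_def by simp
  moreover have "e\<^sup>2 = 1"
    using \<open>1 \<le> \<bar>g\<bar>\<close> unfolding e_def by (auto simp: sgn_if)
  ultimately have prod: "(a * s - e * R) * (a * s + e * R) = s * (s - 2 * a * c)"
    using cs unfolding g_def by (simp add: power2_eq_square algebra_simps)
  have "a * s + e * R \<noteq> 0"
    using sgn_branch_quotient(1)[OF cs \<open>s \<noteq> 0\<close>] \<open>1 \<le> \<bar>g\<bar>\<close> unfolding e_def R_def g_def .
  then have "s\<^sup>2 / (a * s + e * R) = s * (a * s - e * R) / (s - 2 * a * c)"
    using \<open>s - 2 * a * c \<noteq> 0\<close> prod by (simp add: frac_eq_eq power2_eq_square)
  then show ?thesis unfolding e_def R_def .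
qed

lemma gfun_of_nat: "gfun \<alpha> (real n) = (-1) ^ n"
  by (simp add: gfun_def)

lemma connected_Icomp: "connected (Icomp \<alpha> n)"
  unfolding Icomp_def by (rule connected_connected_component)

lemma Icomp_subset: "Icomp \<alpha> n \<subseteq> {x. 0 < x \<and> 1 \<le> \<bar>gfun \<alpha> x\<bar>}"
  unfolding Icomp_def by (rule connected_component_subset)

lemma of_nat_in_Icomp:
  assumes "n \<ge> 1"
  shows "real n \<in> Icomp \<alpha> n"
proof -
  have "real n \<in> {x. 0 < x \<and> 1 \<le> \<bar>gfun \<alpha> x\<bar>}"
    using assms by (simp add: gfun_of_nat)
  then show ?thesis
    unfolding Icomp_def by (simp only: mem_Collect_eq connected_component_refl_eq)
qed

lemma Icomp_sign:
  assumes "n \<ge> 1" "x \<in> Icomp \<alpha> n"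
  shows "1 \<le> (-1) ^ n * gfun \<alpha> x"
proof -
  have "continuous_on {x. 0 < x} (gfun \<alpha>)"
    unfolding gfun_def by (intro continuous_intros) auto
  then have "continuous_on (Icomp \<alpha> n) (gfun \<alpha>)"
    by (rule continuous_on_subset) (use Icomp_subset in blast)
  moreover have "gfun \<alpha> y \<noteq> 0" if "y \<in> Icomp \<alpha> n" for y
    using Icomp_subset that by fastforce
  ultimately have "0 < gfun \<alpha> (real n) * gfun \<alpha> x"
    using connected_continuous_nonzero_same_sign[OF connected_Icomp]
      of_nat_in_Icomp[OF assms(1)] assms(2) by blast
  then have pos: "0 < (-1) ^ n * gfun \<alpha> x"
    by (simp add: gfun_of_nat)
  have "1 \<le> \<bar>gfun \<alpha> x\<bar>"
    using Icomp_subset assms(2) by blast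
  then show ?thesis
    using abs_of_pos[OF pos] by (simp add: abs_mult)
qed

lemma sgn_gfun_on_Icomp:
  assumes "n \<ge> 1" "x \<in> Icomp \<alpha> n"
  shows "sgn (gfun \<alpha> x) = (-1) ^ n"
  using Icomp_sign[OF assms] by (cases "even n") (auto simp: sgn_if)

lemma of_nat_in_Icomp_imp_even:
  assumes "n \<ge> 1" "real m \<in> Icomp \<alpha> n"
  shows "even (m + n)"
proof -
  have "1 \<le> (-1::real) ^ (m + n)"
    using Icomp_sign[OF assms] by (simp add: gfun_of_nat power_add mult.commute)
  then show ?thesis by (cases "even (m + n)") auto
qed

lemma Icomp_subset_interval:
  assumes "n \<ge> 1"
  shows "Icomp \<alpha> n \<subseteq> {real n - 1<..<real n + 1}"
proof
  fix x assume x: "x \<in> Icomp \<alpha> n"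
  have between: "z \<in> Icomp \<alpha> n" if "u \<in> Icomp \<alpha> n" "v \<in> Icomp \<alpha> n" "u \<le> z" "z \<le> v" for u v z
    using connected_Icomp that unfolding connected_iff_interval by blast
  have "x < real (n + 1)"
  proof (rule ccontr)
    assume "\<not> x < real (n + 1)"
    then have "real (n + 1) \<in> Icomp \<alpha> n"
      using between[OF of_nat_in_Icomp[OF assms] x] by simp
    from of_nat_in_Icomp_imp_even[OF assms this] show False by simp
  qed
  moreover have "real (n - 1) < x"
  proof (rule ccontr)
    assume "\<not> real (n - 1) < x"
    moreover have "0 < x" using x Icomp_subset by blast
    ultimately have "real (n - 1) \<in> Icomp \<alpha> n"
      using between[OF x of_nat_in_Icomp[OF assms]] by simp
    from of_nat_in_Icomp_imp_even[OF assms this] assms show False by (cases n) auto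
  qed
  ultimately show "x \<in> {real n - 1<..<real n + 1}"
    using assms by simp
qed

lemma sin_nonzero_on_Icomp:
  assumes "n \<ge> 1" "x \<in> Icomp \<alpha> n - {real n}"
  shows "sin (x * pi) \<noteq> 0"
proof
  assume "sin (x * pi) = 0"
  then obtain i :: int where "x = of_int i"
    using sin_zero_iff_int2 by fastforce
  moreover have "x \<in> {real n - 1<..<real n + 1}"
    using Icomp_subset_interval[OF assms(1)] assms(2) by blast
  ultimately have "i = int n" by simp
  then show False using \<open>x = of_int i\<close> assms(2) by simp
qed

lemma ffun_on_Icomp:
  assumes "n \<ge> 1" "x \<in> Icomp \<alpha> n - {real n}"
  shows "ffun \<alpha> x = (-1) ^ n \<longleftrightarrow> \<bar>gfun \<alpha> x\<bar> = 1"
    and "ffun \<alpha> x \<in> {-1<..<1} \<union> {(-1) ^ n}"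
proof -
  have g1: "1 \<le> \<bar>gfun \<alpha> x\<bar>"
    using Icomp_subset assms(2) by blast
  have sgn: "sgn (gfun \<alpha> x) = (-1) ^ n"
    using sgn_gfun_on_Icomp assms by blast
  note branch = sgn_branch_quotient[where a = "\<alpha> / (4 * x)", OF sin_cos_squared_add2 sin_nonzero_on_Icomp[OF assms],
      folded gfun_def, OF g1, folded ffun_def]
  have "ffun \<alpha> x = (-1) ^ n \<and> \<bar>gfun \<alpha> x\<bar> = 1 \<or> \<bar>ffun \<alpha> x\<bar> < 1 \<and> 1 < \<bar>gfun \<alpha> x\<bar>"
  proof (cases "\<bar>gfun \<alpha> x\<bar> = 1")
    case True
    then show ?thesis using branch(2) sgn by simp
  next
    case False
    then show ?thesis using branch(3) g1 by simp
  qed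
  moreover have "(-1::real) ^ n = 1 \<or> (-1::real) ^ n = -1"
    by (cases "even n") simp_all
  ultimately show "ffun \<alpha> x = (-1) ^ n \<longleftrightarrow> \<bar>gfun \<alpha> x\<bar> = 1"
    and "ffun \<alpha> x \<in> {-1<..<1} \<union> {(-1) ^ n}"
    by (auto simp: abs_less_iff)
qed

lemma ffun_tendsto_at_of_nat:
  assumes "\<alpha> \<noteq> 0" "n \<ge> 1"
  shows "(ffun \<alpha> \<longlongrightarrow> (-1) ^ (n + 1)) (at (real n) within Icomp \<alpha> n)"
proof -
  define d where "d x = sin (x * pi) - 2 * (\<alpha> / (4 * x)) * cos (x * pi)" for x
  define h where "h x = - cos (x * pi) + sin (x * pi) *
    (\<alpha> / (4 * x) * sin (x * pi) - (-1) ^ n * sqrt ((gfun \<alpha> x)\<^sup>2 - 1)) / d x" for x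
  have "d (real n) = - \<alpha> / (2 * real n) * (-1) ^ n"
    unfolding d_def by simp
  then have dn: "d (real n) \<noteq> 0"
    using assms by simp
  have "isCont h (real n)"
    unfolding h_def gfun_def using dn assms(2) by (intro continuous_intros) (auto simp: d_def)
  moreover have "h (real n) = (-1) ^ (n + 1)"
    unfolding h_def by simp
  ultimately have h_lim: "(h \<longlongrightarrow> (-1) ^ (n + 1)) (at (real n) within Icomp \<alpha> n)"
    by (metis continuous_at_imp_continuous_at_within continuous_within)
  have "\<forall>\<^sub>F x in at (real n) within Icomp \<alpha> n. d x \<noteq> 0"
  proof -
    have "isCont d (real n)"
      unfolding d_def using assms(2) by (intro continuous_intros) auto
    then show ?thesis
      using dn by (metis continuous_at_imp_continuous_at_within continuous_within
          tendsto_imp_eventually_ne)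
  qed
  moreover have "\<forall>\<^sub>F x in at (real n) within Icomp \<alpha> n. x \<in> Icomp \<alpha> n - {real n}"
    by (simp add: eventually_at_filter)
  ultimately have "\<forall>\<^sub>F x in at (real n) within Icomp \<alpha> n. h x = ffun \<alpha> x"
  proof eventually_elim
    case (elim x)
    have g1: "1 \<le> \<bar>gfun \<alpha> x\<bar>"
      using Icomp_subset elim(2) by blast
    show "h x = ffun \<alpha> x"
      using sgn_branch_quotient_rationalize[where a = "\<alpha> / (4 * x)", OF sin_cos_squared_add2
          sin_nonzero_on_Icomp[OF assms(2) elim(2)], folded gfun_def, OF g1]
        elim(1) sgn_gfun_on_Icomp[OF assms(2)] elim(2)
      unfolding h_def d_def ffun_def by simp
  qed
  with h_lim show ?thesis
    using Lim_transform_eventually by blast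
qed

theorem proposition3p2:
  fixes \<alpha> :: real and n :: nat
  assumes "\<alpha> \<noteq> 0" and "n \<ge> 1"
  shows "(\<forall>x \<in> Icomp \<alpha> n - {real n}. ffun \<alpha> x \<in> {-1<..<1} \<union> {(-1) ^ n})
    \<and> (\<forall>x \<in> Icomp \<alpha> n - {real n}. ffun \<alpha> x = (-1) ^ n \<longleftrightarrow> \<bar>gfun \<alpha> x\<bar> = 1)
    \<and> (ffun \<alpha> \<longlongrightarrow> (-1) ^ (n + 1)) (at (real n) within Icomp \<alpha> n)"
  using ffun_on_Icomp[OF assms(2)] ffun_tendsto_at_of_nat[OF assms] by blast

end
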